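(* Let $\mathrm{Cir}_9$ be the graph with vertex set $\{1,\dots,9\}$ whose maximal stable sets are exactly $\{1,2,3\},\{4,5,6\},\{7,8,9\},\{1,4,7\},\{3,6,9\}$ (so two distinct vertices are non-adjacent iff they lie together in one of these sets). Then $\mathrm{Cir}_9$ is triangle but not $\cup$-equistable.
   Context: A graph $G$ is triangle if for every maximal stable set $S$ of $G$ and every edge $uv$ of $G$ with $u,v\notin S$, there is $s\in S$ adjacent to both $u$ and $v$. A graph $G=(V,E)$ is equistable if there is $\varphi:V\to\mathbb R_+$ such that for all $S\subseteq V$, $S$ is a maximal stable set iff $\sum_{v\in S}\varphi(v)=1$. A graph is $\cup$-equistable if it or its complement is equistable. *)

theory Defs
  imports Complex_Main
begin

text \<open>Only the part of the relation on the vertex set matters; well-formedness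
  (symmetric, irreflexive, vertices in V) is captured by simple_graph.\<close>

type_synonym 'a graph = "'a set \<times> ('a \<Rightarrow> 'a \<Rightarrow> bool)"

definition verts :: "'a graph \<Rightarrow> 'a set" where "verts G = fst G"
definition adj :: "'a graph \<Rightarrow> 'a \<Rightarrow> 'a \<Rightarrow> bool" where "adj G = snd G"

definition simple_graph :: "'a graph \<Rightarrow> bool" where
  "simple_graph G \<longleftrightarrow> finite (verts G) \<and>
     (\<forall>u v. adj G u v \<longrightarrow> u \<in> verts G \<and> v \<in> verts G \<and> u \<noteq> v \<and> adj G v u)"

definition stable_set :: "'a graph \<Rightarrow> 'a set \<Rightarrow> bool" where
  "stable_set G S \<longleftrightarrow> S \<subseteq> verts G \<and> (\<forall>u\<in>S. \<forall>v\<in>S. \<not> adj G u v)"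

definition maximal_stable_set :: "'a graph \<Rightarrow> 'a set \<Rightarrow> bool" where
  "maximal_stable_set G S \<longleftrightarrow> stable_set G S \<and>
     (\<forall>T. stable_set G T \<and> S \<subseteq> T \<longrightarrow> T = S)"

definition triangle_graph :: "'a graph \<Rightarrow> bool" where
  "triangle_graph G \<longleftrightarrow> (\<forall>S. maximal_stable_set G S \<longrightarrow>
     (\<forall>u v. adj G u v \<and> u \<notin> S \<and> v \<notin> S \<longrightarrow> (\<exists>s\<in>S. adj G s u \<and> adj G s v)))"

definition equistable :: "'a graph \<Rightarrow> bool" where
  "equistable G \<longleftrightarrow> (\<exists>\<phi> :: 'a \<Rightarrow> real. (\<forall>v\<in>verts G. \<phi> v \<ge> 0) \<and>
     (\<forall>S. S \<subseteq> verts G \<longrightarrow> (maximal_stable_set G S \<longleftrightarrow> (\<Sum>v\<in>S. \<phi> v) = 1)))"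

definition complement :: "'a graph \<Rightarrow> 'a graph" where
  "complement G = (verts G, \<lambda>u v. u \<in> verts G \<and> v \<in> verts G \<and> u \<noteq> v \<and> \<not> adj G u v)"

definition cup_equistable :: "'a graph \<Rightarrow> bool" where
  "cup_equistable G \<longleftrightarrow> equistable G \<or> equistable (complement G)"

definition Cir9_blocks :: "nat set set" where
  "Cir9_blocks = {{1,2,3},{4,5,6},{7,8,9},{1,4,7},{3,6,9}}"

definition Cir9 :: "nat graph" where
  "Cir9 = ({1..9}, \<lambda>u v. u \<in> {1..9} \<and> v \<in> {1..9} \<and> u \<noteq> v \<and>
                         \<not> (\<exists>B\<in>Cir9_blocks. u \<in> B \<and> v \<in> B))"

end

theory Submission
  imports Defs "HOL-Library.Multiset"
begin

text \<open>Any two non-adjacent vertices of \<open>Cir\<^sub>9\<close> lie in a common block, and any two vertices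
  of a block dominate all vertices outside it; hence the stable sets are exactly the subsets of
  blocks, the maximal ones are the blocks, and the triangle property becomes a finite check.
  An equistable weighting gives weight 1 to every maximal stable set, so the weight of a set is
  determined whenever it is an integer combination of maximal stable sets. The rows
  \<open>{1,2,3}, {4,5,6}, {7,8,9}\<close> and the columns \<open>{1,4,7}, {2,5,8}, {3,6,9}\<close> both partition the
  vertices, so \<open>{2,5,8}\<close> would get weight \<open>3 - 2 = 1\<close> without being stable. In the complement,
  \<open>{1,5,8} + {2,4,8} = {2,5,8} + {1,4,8}\<close> as multisets, where the first three are maximal cliques
  of \<open>Cir\<^sub>9\<close> but \<open>{1,4,8}\<close> is not a clique.\<close>

lemma maximal_stable_setI:
  assumes "stable_set G S" and "\<And>x. x \<in> verts G \<Longrightarrow> x \<notin> S \<Longrightarrow> \<exists>s\<in>S. adj G x s"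
  shows "maximal_stable_set G S"
  using assms unfolding maximal_stable_set_def stable_set_def by blast

locale block_cover =
  fixes G :: "'a graph" and \<BB> :: "'a set set"
  assumes blocks_nonempty: "\<BB> \<noteq> {}"
    and covers: "\<And>v. v \<in> verts G \<Longrightarrow> \<exists>B\<in>\<BB>. v \<in> B"
    and nonadj_in_block: "\<And>u v. u \<in> verts G \<Longrightarrow> v \<in> verts G \<Longrightarrow> u \<noteq> v \<Longrightarrow> \<not> adj G u v
                                \<Longrightarrow> \<exists>B\<in>\<BB>. u \<in> B \<and> v \<in> B"
    and dominating: "\<And>B u v w. B \<in> \<BB> \<Longrightarrow> u \<in> B \<Longrightarrow> v \<in> B \<Longrightarrow> u \<noteq> v \<Longrightarrow> w \<in> verts G
                                \<Longrightarrow> w \<notin> B \<Longrightarrow> adj G w u \<or> adj G w v"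
begin

text \<open>Two distinct vertices of a stable set span a block, and since they dominate everything
  outside that block, the stable set cannot leave it.\<close>

lemma stable_set_subset_block:
  assumes "stable_set G S"
  shows "\<exists>B\<in>\<BB>. S \<subseteq> B"
proof (cases "\<exists>u\<in>S. \<exists>v\<in>S. u \<noteq> v")
  case True
  then obtain u v where uv: "u \<in> S" "v \<in> S" "u \<noteq> v" by blast
  have S_stable: "S \<subseteq> verts G" "\<And>x y. x \<in> S \<Longrightarrow> y \<in> S \<Longrightarrow> \<not> adj G x y"
    using assms by (auto simp: stable_set_def)
  then obtain B where B: "B \<in> \<BB>" "u \<in> B" "v \<in> B"
    using nonadj_in_block uv by blast
  have "S \<subseteq> B"
    using dominating[OF B uv(3)] S_stable uv by blast
  then show ?thesis using B(1) by blast
next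
  case False
  then have "S = {} \<or> (\<exists>v. S = {v})" by blast
  then show ?thesis
    using assms blocks_nonempty covers by (auto simp: stable_set_def)
qed

lemma maximal_stable_set_iff_block:
  assumes blocks_stable: "\<And>B. B \<in> \<BB> \<Longrightarrow> stable_set G B"
    and blocks_nontrivial: "\<And>B. B \<in> \<BB> \<Longrightarrow> \<exists>u\<in>B. \<exists>v\<in>B. u \<noteq> v"
  shows "maximal_stable_set G S \<longleftrightarrow> S \<in> \<BB>"
proof
  assume max: "maximal_stable_set G S"
  then obtain B where "B \<in> \<BB>" "S \<subseteq> B"
    using stable_set_subset_block by (meson maximal_stable_set_def)
  with max blocks_stable show "S \<in> \<BB>"
    unfolding maximal_stable_set_def by metis
next
  assume S: "S \<in> \<BB>"
  then obtain u v where uv: "u \<in> S" "v \<in> S" "u \<noteq> v"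
    using blocks_nontrivial by blast
  show "maximal_stable_set G S"
  proof (rule maximal_stable_setI[OF blocks_stable[OF S]])
    fix x
    assume "x \<in> verts G" "x \<notin> S"
    then have "adj G x u \<or> adj G x v"
      using dominating[OF S uv] by blast
    then show "\<exists>s\<in>S. adj G x s"
      using uv by blast
  qed
qed

end

lemma sum_mset_weight_sum_mset_set:
  fixes \<phi> :: "'a \<Rightarrow> real"
  shows "(\<Sum>v\<in>#(\<Sum>S\<in>#Ss. mset_set S). \<phi> v) = (\<Sum>S\<in>#Ss. \<Sum>v\<in>S. \<phi> v)"
  by (induction Ss) (simp_all add: sum_unfold_sum_mset)

lemma equistable_exchange:
  assumes "equistable G" and "finite (verts G)"
    and "\<forall>S\<in>#Ss. maximal_stable_set G S" and "\<forall>S\<in>#Ts. maximal_stable_set G S"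
    and "T \<subseteq> verts G"
    and cover: "(\<Sum>S\<in>#Ss. mset_set S) = (\<Sum>S\<in>#Ts. mset_set S) + mset_set T"
    and "size Ss = size Ts + 1"
  shows "maximal_stable_set G T"
proof -
  obtain \<phi> :: "'a \<Rightarrow> real" where
    \<phi>: "\<And>S. S \<subseteq> verts G \<Longrightarrow> maximal_stable_set G S \<longleftrightarrow> (\<Sum>v\<in>S. \<phi> v) = 1"
    using assms(1) unfolding equistable_def by blast
  have weight_one: "(\<Sum>v\<in>S. \<phi> v) = 1" if "maximal_stable_set G S" for S
    using \<phi> that by (meson maximal_stable_set_def stable_set_def)
  have "(\<Sum>S\<in>#Ss. \<Sum>v\<in>S. \<phi> v) = (\<Sum>S\<in>#Ts. \<Sum>v\<in>S. \<phi> v) + (\<Sum>v\<in>T. \<phi> v)"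
    using arg_cong[OF cover, of "\<lambda>M. \<Sum>v\<in>#M. \<phi> v"] finite_subset[OF assms(5,2)]
    by (simp add: sum_mset_weight_sum_mset_set sum_unfold_sum_mset)
  moreover have "(\<Sum>S\<in>#Ss. \<Sum>v\<in>S. \<phi> v) = size Ss" "(\<Sum>S\<in>#Ts. \<Sum>v\<in>S. \<phi> v) = size Ts"
    using assms(3,4) weight_one by (simp_all cong: image_mset_cong)
  ultimately have "(\<Sum>v\<in>T. \<phi> v) = 1"
    using assms(7) by simp
  then show ?thesis
    using \<phi> assms(5) by blast
qed

lemma verts_complement [simp]: "verts (complement G) = verts G"
  by (simp add: complement_def verts_def)

lemma adj_complement [simp]:
  "adj (complement G) u v \<longleftrightarrow> u \<in> verts G \<and> v \<in> verts G \<and> u \<noteq> v \<and> \<not> adj G u v"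
  by (simp add: complement_def adj_def verts_def)

lemma verts_Cir9 [simp]: "verts Cir9 = {1,2,3,4,5,6,7,8,9}"
  by (auto simp: verts_def Cir9_def)

lemma adj_Cir9 [simp]:
  "adj Cir9 u v \<longleftrightarrow> u \<in> {1,2,3,4,5,6,7,8,9} \<and> v \<in> {1,2,3,4,5,6,7,8,9} \<and> u \<noteq> v \<and>
     \<not> (\<exists>B\<in>{{1,2,3},{4,5,6},{7,8,9},{1,4,7},{3,6,9}}. u \<in> B \<and> v \<in> B)"
proof -
  have "{1..9::nat} = {1,2,3,4,5,6,7,8,9}" by auto
  then show ?thesis
    by (simp add: adj_def Cir9_def Cir9_blocks_def)
qed

lemma Cir9_blocks_dominating:
  "\<forall>B\<in>Cir9_blocks. \<forall>u\<in>B. \<forall>v\<in>B. \<forall>w\<in>verts Cir9. w \<notin> B \<and> u \<noteq> v \<longrightarrow> adj Cir9 w u \<or> adj Cir9 w v"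
  by code_simp

lemma simple_graph_Cir9: "simple_graph Cir9"
  by (auto simp: simple_graph_def)

interpretation Cir9: block_cover Cir9 Cir9_blocks
proof
  show "\<exists>B\<in>Cir9_blocks. u \<in> B \<and> v \<in> B"
    if "u \<in> verts Cir9" "v \<in> verts Cir9" "u \<noteq> v" "\<not> adj Cir9 u v" for u v
    using that unfolding Cir9_blocks_def by simp
  show "adj Cir9 w u \<or> adj Cir9 w v"
    if "B \<in> Cir9_blocks" "u \<in> B" "v \<in> B" "u \<noteq> v" "w \<in> verts Cir9" "w \<notin> B" for B u v w
    using Cir9_blocks_dominating that by blast
qed (auto simp: Cir9_blocks_def)

lemma maximal_stable_set_Cir9_iff: "maximal_stable_set Cir9 S \<longleftrightarrow> S \<in> Cir9_blocks"
  by (rule Cir9.maximal_stable_set_iff_block) (auto simp: Cir9_blocks_def stable_set_def)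

lemma triangle_graph_Cir9: "triangle_graph Cir9"
proof -
  have "\<forall>B\<in>Cir9_blocks. \<forall>u\<in>verts Cir9. \<forall>v\<in>verts Cir9.
          adj Cir9 u v \<and> u \<notin> B \<and> v \<notin> B \<longrightarrow> (\<exists>s\<in>B. adj Cir9 s u \<and> adj Cir9 s v)"
    by code_simp
  with simple_graph_Cir9 show ?thesis
    unfolding triangle_graph_def maximal_stable_set_Cir9_iff simple_graph_def by blast
qed

lemma Cir9_not_equistable: "\<not> equistable Cir9"
proof
  assume "equistable Cir9"
  then have "maximal_stable_set Cir9 {2,5,8}"
    by (rule equistable_exchange[where Ss = "{#{1,2,3},{4,5,6},{7,8,9}#}" and Ts = "{#{1,4,7},{3,6,9}#}"])
      (simp_all add: maximal_stable_set_Cir9_iff Cir9_blocks_def add_mset_commute)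
  then show False
    by (simp add: maximal_stable_set_def stable_set_def)
qed

lemma complement_Cir9_not_equistable: "\<not> equistable (complement Cir9)"
proof
  assume "equistable (complement Cir9)"
  have "maximal_stable_set (complement Cir9) S" if "S \<in> {{1,5,8},{2,4,8},{2,5,8}}" for S
    using that by (auto intro!: maximal_stable_setI simp: stable_set_def)
  with \<open>equistable (complement Cir9)\<close> have "maximal_stable_set (complement Cir9) {1,4,8}"
    by (intro equistable_exchange[where Ss = "{#{1,5,8},{2,4,8}#}" and Ts = "{#{2,5,8}#}"])
      (simp_all add: add_mset_commute)
  then show False
    by (simp add: maximal_stable_set_def stable_set_def)
qed

theorem proposition41:
  shows "simple_graph Cir9 \<and> triangle_graph Cir9 \<and> \<not> cup_equistable Cir9"
  using simple_graph_Cir9 triangle_graph_Cir9 Cir9_not_equistable complement_Cir9_not_equistable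
  unfolding cup_equistable_def by blast

end
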